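(* Let $\mathsf P$ be a network coding problem. A rate-capacity tuple $(\lambda,\omega)$ is $0$-achievable subject to a routing constraint if and only if \[(\lambda,\omega)\in\mathsf{CL}\big(\mathrm{proj}_{\mathsf P}[\Gamma_{AA}\cap\mathcal C_T(\mathsf P)\cap\mathcal C_D(\mathsf P)\cap\mathcal C_I(\mathsf P)]\big).\]
   Context: A network is $\mathsf G=(\mathcal V,\mathcal E)$, $\mathcal V$ a finite set of nodes, $\mathcal E$ a finite set of hyperedges, each $e$ with tail $\mathrm{tail}(e)\in\mathcal V$ and head $\mathrm{head}(e)\subseteq\mathcal V$, without directed cycles. A connection constraint $\mathsf M=(\mathcal S,O,D)$: finite source index set $\mathcal S$, $O:\mathcal S\to2^{\mathcal V}$ (where source $s$ is available), $D:\mathcal S\to2^{\mathcal V}$ (sinks of $s$). $\mathsf P=(\mathsf G,\mathsf M)$. Sources are imaginary edges with $\mathrm{head}(s)=O(s)$; $\mathrm{in}(e)=\{f\in\mathcal S\cup\mathcal E:\mathrm{tail}(e)\in\mathrm{head}(f)\}$ for $e\in\mathcal E$, $\mathrm{in}(u)=\{f\in\mathcal S\cup\mathcal E:u\in\mathrm{head}(f)\}$ for $u\in\mathcal V$. A rate-capacity tuple is $(\lambda,\omega)$, $\lambda:\mathcal S\to\mathbb R_{\ge0}$, $\omega:\mathcal E\to\mathbb R_{\ge0}$. A routing subnetwork is a subset $\mathcal T\subseteq\mathcal S\cup\mathcal E$ with $|\mathcal T\cap\mathcal S|=1$ (the unique source in it is denoted $\nu(\mathcal T)$) such that $\mathrm{in}(e)\cap\mathcal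 T\ne\emptyset$ for every $e\in\mathcal T\cap\mathcal E$. A tuple $(\lambda,\omega)$ is $0$-achievable subject to a routing constraint if there is a (finite) collection of routing subnetworks $\mathcal T_i$ with capacities $c_i\ge0$ such that: (R1) $\omega(e)\ge\sum_{i:e\in\mathcal T_i}c_i$ for every $e\in\mathcal E$; (R2) for every $i$ and every $u\in D(\nu(\mathcal T_i))$ there is $e\in\mathcal T_i$ with $u\in\mathrm{head}(e)$; (R3) $\lambda(s)=\sum_{i:\nu(\mathcal T_i)=s}c_i$ for every $s\in\mathcal S$. $\mathcal H[\mathcal S\cup\mathcal E]$ is the set of real functions on subsets of $\mathcal S\cup\mathcal E$; $g(\alpha\mid\beta)=g(\alpha\cup\beta)-g(\beta)$. A function $h$ is atomic if there is $\mathcal T\subseteq\mathcal S\cup\mathcal E$ with $h(\beta)=1$ when $\beta\cap\mathcal T\neq\emptyset$ and $h(\beta)=0$ otherwise; it is almost atomic if $h=\sum_ic_ih^i$ (finite sum) with $c_i\ge0$ and each $h^i$ atomic. $\Gamma_{AA}$ is the set of almost atomic functions. $\mathcal C_I(\mathsf P)=\{h:h(\mathcal S)=\sum_sh(s)\}$, $\mathcal C_T(\mathsf P)=\{h:h(e\mid\mathrm{in}(e))=0\ \forall e\in\mathcal E\}$, $\mathcal C_D(\mathsf P)=\{h:h(s\mid\mathrm{in}(u))=0\ \forall s,u\in D(s)\}$. $\mathrm{proj}_{\mathsf P}[h]=(h(s),s\in\mathcal S;h(e),e\in\mathcal E)$, applied elementwise to sets. For a set $\mathcal R$ of tuples, $\mathsf{CL}(\mathcal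 R)$ is the set of $(\lambda,\omega)$ such that there exist $(\lambda^n,\omega^n)\in\mathcal R$ and $c_n>0$ with $\lim_nc_n\omega^n(e)\le\omega(e)$ and $\lim_nc_n\lambda^n(s)\ge\lambda(s)$ for all $e,s$. *)

theory Defs
  imports "HOL-Analysis.Analysis"
begin

text \<open>The ground set S \<union> E is represented inside
the sum type 's + 'e as Inl ` S \<union> Inr ` E.\<close>

definition ground :: "'s set \<Rightarrow> 'e set \<Rightarrow> ('s + 'e) set" where
  "ground S E = Inl ` S \<union> Inr ` E"

text \<open>Head of a source (imaginary edge) is Orig(s), head of an edge is head(e).\<close>
definition headX :: "('s \<Rightarrow> 'v set) \<Rightarrow> ('e \<Rightarrow> 'v set) \<Rightarrow> ('s + 'e) \<Rightarrow> 'v set" where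
  "headX Orig headf f = (case f of Inl s \<Rightarrow> Orig s | Inr e \<Rightarrow> headf e)"

definition network_problem ::
  "'v set \<Rightarrow> 'e set \<Rightarrow> ('e \<Rightarrow> 'v) \<Rightarrow> ('e \<Rightarrow> 'v set) \<Rightarrow>
   's set \<Rightarrow> ('s \<Rightarrow> 'v set) \<Rightarrow> ('s \<Rightarrow> 'v set) \<Rightarrow> bool" where
  "network_problem V E tailf headf S Orig D \<longleftrightarrow>
     finite V \<and> finite E \<and> finite S \<and>
     (\<forall>e\<in>E. tailf e \<in> V \<and> headf e \<subseteq> V) \<and>
     (\<forall>s\<in>S. Orig s \<subseteq> V \<and> D s \<subseteq> V) \<and>
     acyclic {(tailf e, v) | e v. e \<in> E \<and> v \<in> headf e}"

definition in_node :: "'s set \<Rightarrow> 'e set \<Rightarrow> ('s \<Rightarrow> 'v set) \<Rightarrow> ('e \<Rightarrow> 'v set)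
    \<Rightarrow> 'v \<Rightarrow> ('s + 'e) set" where
  "in_node S E Orig headf u = {f \<in> ground S E. u \<in> headX Orig headf f}"

definition in_edge :: "'s set \<Rightarrow> 'e set \<Rightarrow> ('s \<Rightarrow> 'v set) \<Rightarrow> ('e \<Rightarrow> 'v)
    \<Rightarrow> ('e \<Rightarrow> 'v set) \<Rightarrow> 'e \<Rightarrow> ('s + 'e) set" where
  "in_edge S E Orig tailf headf e = in_node S E Orig headf (tailf e)"

definition routing_subnetwork ::
  "'s set \<Rightarrow> 'e set \<Rightarrow> ('e \<Rightarrow> 'v) \<Rightarrow> ('e \<Rightarrow> 'v set) \<Rightarrow> ('s \<Rightarrow> 'v set)
   \<Rightarrow> ('s + 'e) set \<Rightarrow> bool" where
  "routing_subnetwork S E tailf headf Orig T \<longleftrightarrow>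
     T \<subseteq> ground S E \<and> card (T \<inter> Inl ` S) = 1 \<and>
     (\<forall>e\<in>E. Inr e \<in> T \<longrightarrow> in_edge S E Orig tailf headf e \<inter> T \<noteq> {})"

definition nu :: "('s + 'e) set \<Rightarrow> 's" where
  "nu T = (THE s. Inl s \<in> T)"

definition zero_achievable_routing ::
  "'v set \<Rightarrow> 'e set \<Rightarrow> ('e \<Rightarrow> 'v) \<Rightarrow> ('e \<Rightarrow> 'v set) \<Rightarrow>
   's set \<Rightarrow> ('s \<Rightarrow> 'v set) \<Rightarrow> ('s \<Rightarrow> 'v set) \<Rightarrow>
   ('s \<Rightarrow> real) \<Rightarrow> ('e \<Rightarrow> real) \<Rightarrow> bool" where
  "zero_achievable_routing V E tailf headf S Orig D lam om \<longleftrightarrow>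
     (\<exists>(n::nat) (T :: nat \<Rightarrow> ('s + 'e) set) (c :: nat \<Rightarrow> real).
        (\<forall>i<n. routing_subnetwork S E tailf headf Orig (T i) \<and> c i \<ge> 0) \<and>
        (\<forall>e\<in>E. om e \<ge> (\<Sum>i\<in>{i. i < n \<and> Inr e \<in> T i}. c i)) \<and>
        (\<forall>i<n. \<forall>u\<in>D (nu (T i)). \<exists>f\<in>T i. u \<in> headX Orig headf f) \<and>
        (\<forall>s\<in>S. lam s = (\<Sum>i\<in>{i. i < n \<and> nu (T i) = s}. c i)))"

text \<open>Functions h :: ('s+'e) set \<Rightarrow> real; only values on subsets of X matter.\<close>

definition atomic_on :: "('a) set \<Rightarrow> ('a set \<Rightarrow> real) \<Rightarrow> bool" where
  "atomic_on X h \<longleftrightarrow> (\<exists>T\<subseteq>X. \<forall>\<beta>\<subseteq>X. h \<beta> = (if \<beta> \<inter> T \<noteq> {} then 1 else 0))"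

definition almost_atomic_on :: "('a) set \<Rightarrow> ('a set \<Rightarrow> real) \<Rightarrow> bool" where
  "almost_atomic_on X h \<longleftrightarrow>
     (\<exists>(n::nat) (c :: nat \<Rightarrow> real) (hs :: nat \<Rightarrow> 'a set \<Rightarrow> real).
        (\<forall>i<n. c i \<ge> 0 \<and> atomic_on X (hs i)) \<and>
        (\<forall>\<beta>\<subseteq>X. h \<beta> = (\<Sum>i<n. c i * hs i \<beta>)))"

definition cond_diff :: "('a set \<Rightarrow> real) \<Rightarrow> 'a set \<Rightarrow> 'a set \<Rightarrow> real" where
  "cond_diff g \<alpha> \<beta> = g (\<alpha> \<union> \<beta>) - g \<beta>"

definition C_I :: "'s set \<Rightarrow> 'e set \<Rightarrow> (('s + 'e) set \<Rightarrow> real) \<Rightarrow> bool" where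
  "C_I S E h \<longleftrightarrow> h (Inl ` S) = (\<Sum>s\<in>S. h {Inl s})"

definition C_T :: "'s set \<Rightarrow> 'e set \<Rightarrow> ('e \<Rightarrow> 'v) \<Rightarrow> ('e \<Rightarrow> 'v set) \<Rightarrow>
    ('s \<Rightarrow> 'v set) \<Rightarrow> (('s + 'e) set \<Rightarrow> real) \<Rightarrow> bool" where
  "C_T S E tailf headf Orig h \<longleftrightarrow> (\<forall>e\<in>E. cond_diff h {Inr e} (in_edge S E Orig tailf headf e) = 0)"

definition C_D :: "'s set \<Rightarrow> 'e set \<Rightarrow> ('e \<Rightarrow> 'v set) \<Rightarrow>
    ('s \<Rightarrow> 'v set) \<Rightarrow> ('s \<Rightarrow> 'v set) \<Rightarrow> (('s + 'e) set \<Rightarrow> real) \<Rightarrow> bool" where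
  "C_D S E headf Orig D h \<longleftrightarrow>
     (\<forall>s\<in>S. \<forall>u\<in>D s. cond_diff h {Inl s} (in_node S E Orig headf u) = 0)"

definition proj :: "(('s + 'e) set \<Rightarrow> real) \<Rightarrow> ('s \<Rightarrow> real) \<times> ('e \<Rightarrow> real)" where
  "proj h = ((\<lambda>s. h {Inl s}), (\<lambda>e. h {Inr e}))"

text \<open>The closure operator CL (limits are required to exist).\<close>
definition CL :: "'s set \<Rightarrow> 'e set \<Rightarrow> (('s \<Rightarrow> real) \<times> ('e \<Rightarrow> real)) set
    \<Rightarrow> (('s \<Rightarrow> real) \<times> ('e \<Rightarrow> real)) set" where
  "CL S E R = {(lam, om). \<exists>(seq :: nat \<Rightarrow> ('s \<Rightarrow> real) \<times> ('e \<Rightarrow> real)) (c :: nat \<Rightarrow> real).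
      (\<forall>n. seq n \<in> R \<and> c n > 0) \<and>
      (\<forall>e\<in>E. \<exists>L. (\<lambda>n. c n * snd (seq n) e) \<longlonglongrightarrow> L \<and> L \<le> om e) \<and>
      (\<forall>s\<in>S. \<exists>L. (\<lambda>n. c n * fst (seq n) s) \<longlonglongrightarrow> L \<and> L \<ge> lam s)}"

end

theory Submission
  imports Defs
begin

text \<open>Write an almost atomic function as \<open>h = (\<Sum>i. c i * atom (T i))\<close> with all \<open>c i > 0\<close>.
Each of the constraints C_T, C_D and C_I states that a sum of non-negative per-atom terms
vanishes, so h meets it iff every atom does. For an atom whose support contains a source this
says precisely that the support is a routing subnetwork whose single source reaches all its
sinks; atoms without a source only add to the capacities. Hence the projection of h is a routing
of the rates h(s) within the capacities h(e), and every routing arises this way. The closure CL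
adds nothing: after rescaling, a sequence of routings has bounded weights on the finitely many
admissible subnetworks, a convergent subsequence yields a routing of rates at least \<open>\<lambda>\<close>
within \<open>\<omega>\<close>, and scaling down the weights of each source makes the rates exactly \<open>\<lambda>\<close>.\<close>

definition atom :: "'a set \<Rightarrow> 'a set \<Rightarrow> real" where
  "atom T \<beta> = (if \<beta> \<inter> T \<noteq> {} then 1 else 0)"

lemma atom_mono: "A \<subseteq> B \<Longrightarrow> atom T A \<le> atom T B"
  by (auto simp: atom_def)

lemma atom_singleton [simp]: "atom T {x} = (if x \<in> T then 1 else 0)"
  by (auto simp: atom_def)

lemma sum_atom_singletons: "finite A \<Longrightarrow> (\<Sum>a\<in>A. atom T {a}) = card (A \<inter> T)"
  by (simp add: sum.If_cases Int_def)

lemma almost_atomic_on_atom_sum: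
  fixes c :: "nat \<Rightarrow> real"
  assumes "\<forall>i<m. 0 \<le> c i \<and> T i \<subseteq> X"
  shows "almost_atomic_on X (\<lambda>\<beta>. \<Sum>i<m. c i * atom (T i) \<beta>)"
  unfolding almost_atomic_on_def atomic_on_def
  using assms by (intro exI[where x=m] exI[where x=c] exI[where x="\<lambda>i. atom (T i)"]) (auto simp: atom_def)

lemma almost_atomic_onE:
  assumes "almost_atomic_on X h"
  obtains m c T where "\<forall>i<(m::nat). 0 \<le> c i \<and> T i \<subseteq> X"
    and "\<forall>\<beta>\<subseteq>X. h \<beta> = (\<Sum>i<m. c i * atom (T i) \<beta>)"
proof -
  obtain m :: nat and c :: "nat \<Rightarrow> real" and hs :: "nat \<Rightarrow> 'a set \<Rightarrow> real"
    where c: "\<forall>i<m. 0 \<le> c i \<and> atomic_on X (hs i)"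
      and h: "\<forall>\<beta>\<subseteq>X. h \<beta> = (\<Sum>i<m. c i * hs i \<beta>)"
    using assms unfolding almost_atomic_on_def by blast
  have "\<forall>i. \<exists>T. i < m \<longrightarrow> T \<subseteq> X \<and> (\<forall>\<beta>\<subseteq>X. hs i \<beta> = atom T \<beta>)"
    using c unfolding atomic_on_def atom_def by blast
  then obtain T where T: "\<forall>i. i < m \<longrightarrow> T i \<subseteq> X \<and> (\<forall>\<beta>\<subseteq>X. hs i \<beta> = atom (T i) \<beta>)"
    by (rule choice[THEN exE])
  show thesis
  proof (rule that)
    show "\<forall>i<m. 0 \<le> c i \<and> T i \<subseteq> X" using c T by blast
    show "\<forall>\<beta>\<subseteq>X. h \<beta> = (\<Sum>i<m. c i * atom (T i) \<beta>)"
      using h T by (auto intro: sum.cong)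
  qed
qed

lemma atom_sum_singleton:
  fixes c :: "nat \<Rightarrow> real"
  shows "(\<Sum>i<m. c i * atom (T i) {x}) = (\<Sum>i\<in>{i. i < m \<and> x \<in> T i}. c i)"
proof -
  have "(\<Sum>i<m. c i * atom (T i) {x}) = (\<Sum>i\<in>{i\<in>{..<m}. x \<in> T i}. c i)"
    by (subst sum.inter_filter) (auto intro!: sum.cong)
  then show ?thesis by simp
qed

lemma atom_sum_singleton_pos:
  fixes c :: "nat \<Rightarrow> real"
  assumes "\<forall>i<m. 0 \<le> c i"
  shows "(\<Sum>i<m. c i * atom (T i) {x}) = (\<Sum>i\<in>{i. i < m \<and> 0 < c i \<and> x \<in> T i}. c i)"
proof -
  have "(\<Sum>i<m. c i * atom (T i) {x}) = (\<Sum>i\<in>{i\<in>{..<m}. 0 < c i \<and> x \<in> T i}. c i)"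
    using assms by (subst sum.inter_filter) (auto intro!: sum.cong)
  then show ?thesis by simp
qed

lemma sum_nonneg_weighted_eq_0_imp:
  fixes c g :: "'i \<Rightarrow> real"
  assumes "finite I" "\<forall>j\<in>I. 0 \<le> c j \<and> 0 \<le> g j" "(\<Sum>j\<in>I. c j * g j) = 0" "i \<in> I" "0 < c i"
  shows "g i = 0"
  using assms sum_nonneg_eq_0_iff[of I "\<lambda>j. c j * g j"] by auto

lemma atom_sum_absorb:
  fixes c :: "nat \<Rightarrow> real"
  assumes c: "\<forall>j<m. 0 \<le> c j" and h: "\<forall>\<beta>\<subseteq>X. h \<beta> = (\<Sum>j<m. c j * atom (T j) \<beta>)"
    and AB: "cond_diff h A B = 0" "A \<subseteq> X" "B \<subseteq> X"
    and i: "i < m" "0 < c i" and "A \<inter> T i \<noteq> {}"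
  shows "B \<inter> T i \<noteq> {}"
proof -
  have "(\<Sum>j<m. c j * (atom (T j) (A \<union> B) - atom (T j) B)) = h (A \<union> B) - h B"
    using h AB(2,3) by (simp add: right_diff_distrib sum_subtractf)
  also have "\<dots> = 0" using AB(1) by (simp add: cond_diff_def)
  finally have "atom (T i) (A \<union> B) - atom (T i) B = 0"
    using c i atom_mono[of B "A \<union> B"] by (intro sum_nonneg_weighted_eq_0_imp[of "{..<m}"]) auto
  with \<open>A \<inter> T i \<noteq> {}\<close> show ?thesis by (auto simp: atom_def split: if_splits)
qed

lemma atom_sum_additive_imp_unique:
  fixes c :: "nat \<Rightarrow> real"
  assumes c: "\<forall>j<m. 0 \<le> c j" and h: "\<forall>\<beta>\<subseteq>X. h \<beta> = (\<Sum>j<m. c j * atom (T j) \<beta>)"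
    and A: "finite A" "A \<subseteq> X" "h A = (\<Sum>a\<in>A. h {a})"
    and i: "i < m" "0 < c i" and "a \<in> A \<inter> T i" "b \<in> A \<inter> T i"
  shows "a = b"
proof (rule ccontr)
  assume "a \<noteq> b"
  define g where "g j = real (card (A \<inter> T j)) - atom (T j) A" for j
  have "g j \<ge> 0" for j
    using A(1) by (cases "A \<inter> T j = {}") (auto simp: g_def atom_def Suc_le_eq card_gt_0_iff)
  moreover have "(\<Sum>j<m. c j * g j) = 0"
  proof -
    have "(\<Sum>a\<in>A. h {a}) = (\<Sum>a\<in>A. \<Sum>j<m. c j * atom (T j) {a})"
      using h A(2) by (intro sum.cong) auto
    also have "\<dots> = (\<Sum>j<m. c j * card (A \<inter> T j))"
      using A(1) by (subst sum.swap) (simp add: sum_distrib_left flip: sum_atom_singletons)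
    finally show ?thesis
      using h A by (simp add: g_def right_diff_distrib sum_subtractf)
  qed
  ultimately have "g i = 0"
    using c i by (intro sum_nonneg_weighted_eq_0_imp[of "{..<m}"]) auto
  moreover have "2 \<le> card (A \<inter> T i)"
    using \<open>a \<noteq> b\<close> A(1) \<open>a \<in> A \<inter> T i\<close> \<open>b \<in> A \<inter> T i\<close> card_mono[of "A \<inter> T i" "{a, b}"] by auto
  ultimately show False by (simp add: g_def atom_def split: if_splits)
qed

lemma cond_diff_atom_sum_eq_0:
  fixes c :: "nat \<Rightarrow> real"
  assumes "\<forall>i<m. atom (T i) (A \<union> B) = atom (T i) B"
  shows "cond_diff (\<lambda>\<beta>. \<Sum>i<m. c i * atom (T i) \<beta>) A B = 0"
  using assms by (simp add: cond_diff_def)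

lemma sum_fibres:
  assumes "finite I" "finite K"
  shows "(\<Sum>k\<in>{k\<in>K. P k}. \<Sum>i\<in>{i\<in>I. F i = k}. c i) = (\<Sum>i\<in>{i\<in>I. F i \<in> K \<and> P (F i)}. c i)"
proof -
  have "(\<Sum>k\<in>{k\<in>K. P k}. \<Sum>i\<in>{i\<in>I. F i = k}. c i)
      = (\<Sum>k\<in>{k\<in>K. P k}. \<Sum>i\<in>{i\<in>{i\<in>I. F i \<in> K \<and> P (F i)}. F i = k}. c i)"
    by (intro sum.cong) auto
  also have "\<dots> = (\<Sum>i\<in>{i\<in>I. F i \<in> K \<and> P (F i)}. c i)"
    using assms by (intro sum.group) auto
  finally show ?thesis .
qed

lemma finite_family_convergent_subsequence:
  fixes x :: "nat \<Rightarrow> 'a \<Rightarrow> real"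
  assumes "finite K" "\<forall>k\<in>K. Bseq (\<lambda>n. x n k)"
  shows "\<exists>r. strict_mono r \<and> (\<forall>k\<in>K. convergent (\<lambda>n. x (r n) k))"
  using assms
proof (induction K rule: finite_induct)
  case empty
  show ?case using strict_mono_id by blast
next
  case (insert a K)
  then obtain r where r: "strict_mono r" "\<forall>k\<in>K. convergent (\<lambda>n. x (r n) k)" by auto
  have "bounded (range (\<lambda>n. x n a))" using insert.prems by (simp add: Bseq_eq_bounded)
  then have "bounded (range (\<lambda>n. x (r n) a))" by (rule bounded_subset) auto
  then obtain l r' where r': "strict_mono r'" "((\<lambda>n. x (r n) a) \<circ> r') \<longlonglongrightarrow> l"
    using bounded_imp_convergent_subsequence by blast
  have "convergent (\<lambda>n. x ((r \<circ> r') n) k)" if "k \<in> insert a K" for k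
  proof (cases "k = a")
    case True
    then show ?thesis using r'(2) by (auto simp: o_def convergent_def)
  next
    case False
    then have "convergent ((\<lambda>n. x (r n) k) \<circ> r')" using that r(2) r'(1)
      by (auto simp: convergent_def intro: LIMSEQ_subseq_LIMSEQ)
    then show ?thesis by (simp add: o_def)
  qed
  then show ?case using strict_mono_o[OF r(1) r'(1)] by blast
qed

lemma CL_const:
  assumes "x \<in> R" "\<forall>s\<in>S. lam s \<le> fst x s" "\<forall>e\<in>E. snd x e \<le> om e"
  shows "(lam, om) \<in> CL S E R"
  unfolding CL_def using assms
  by (auto intro!: exI[where x="\<lambda>n. x"] exI[where x="\<lambda>n. 1"])

lemma routing_subnetwork_source:
  assumes "routing_subnetwork S E tailf headf Orig T"
  shows "nu T \<in> S" and "Inl s \<in> T \<longleftrightarrow> s = nu T"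
proof -
  have sub: "T \<subseteq> ground S E" using assms by (simp add: routing_subnetwork_def)
  have "card (T \<inter> Inl ` S) = 1" using assms by (simp add: routing_subnetwork_def)
  then obtain x where x: "T \<inter> Inl ` S = {x}" by (rule card_1_singletonE)
  then obtain s0 where s0: "s0 \<in> S" "Inl s0 \<in> T" by (metis Int_iff imageE singletonI)
  have src: "Inl s \<in> T \<longleftrightarrow> s = s0" for s
  proof
    assume "Inl s \<in> T"
    moreover from this have "s \<in> S" using sub by (auto simp: ground_def)
    ultimately have "Inl s \<in> T \<inter> Inl ` S" "Inl s0 \<in> T \<inter> Inl ` S" using s0 by auto
    then show "s = s0" unfolding x by auto
  qed (use s0 in simp)
  then have "nu T = s0" unfolding nu_def by simp
  with s0 src show "nu T \<in> S" "Inl s \<in> T \<longleftrightarrow> s = nu T" by auto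
qed

locale routing_problem =
  fixes S :: "'s set" and E :: "'e set" and tailf :: "'e \<Rightarrow> 'v" and headf :: "'e \<Rightarrow> 'v set"
    and Orig :: "'s \<Rightarrow> 'v set" and D :: "'s \<Rightarrow> 'v set"
  assumes finite_S: "finite S" and finite_E: "finite E"
begin

definition feasible :: "('s + 'e) set set" where
  "feasible = {T. routing_subnetwork S E tailf headf Orig T \<and>
                  (\<forall>u\<in>D (nu T). \<exists>f\<in>T. u \<in> headX Orig headf f)}"

definition constrained :: "(('s + 'e) set \<Rightarrow> real) set" where
  "constrained = {h. almost_atomic_on (ground S E) h \<and> C_T S E tailf headf Orig h
                     \<and> C_D S E headf Orig D h \<and> C_I S E h}"

definition source_load :: "(('s + 'e) set \<Rightarrow> real) \<Rightarrow> 's \<Rightarrow> real" where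
  "source_load w s = (\<Sum>T\<in>{T\<in>feasible. nu T = s}. w T)"

definition edge_load :: "(('s + 'e) set \<Rightarrow> real) \<Rightarrow> 'e \<Rightarrow> real" where
  "edge_load w e = (\<Sum>T\<in>{T\<in>feasible. Inr e \<in> T}. w T)"

lemma finite_ground: "finite (ground S E)"
  using finite_S finite_E by (simp add: ground_def)

lemma finite_feasible: "finite feasible"
proof (rule finite_subset)
  show "feasible \<subseteq> Pow (ground S E)"
    by (auto simp: feasible_def routing_subnetwork_def)
qed (simp add: finite_ground)

lemma feasible_source:
  assumes "T \<in> feasible"
  shows "nu T \<in> S" and "Inl s \<in> T \<longleftrightarrow> s = nu T"
proof -
  have "routing_subnetwork S E tailf headf Orig T" using assms by (simp add: feasible_def)
  then show "nu T \<in> S" "Inl s \<in> T \<longleftrightarrow> s = nu T" by (rule routing_subnetwork_source)+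
qed

lemma feasible_atom_in_edge:
  assumes "T \<in> feasible" "e \<in> E"
  shows "atom T ({Inr e} \<union> in_edge S E Orig tailf headf e) = atom T (in_edge S E Orig tailf headf e)"
  using assms unfolding feasible_def routing_subnetwork_def atom_def by auto

lemma feasible_atom_in_node:
  assumes "T \<in> feasible" "u \<in> D s"
  shows "atom T ({Inl s} \<union> in_node S E Orig headf u) = atom T (in_node S E Orig headf u)"
proof (cases "Inl s \<in> T")
  case True
  then have "s = nu T" using feasible_source(2)[OF assms(1)] by simp
  with assms obtain f where "f \<in> T" "u \<in> headX Orig headf f"
    unfolding feasible_def by blast
  moreover have "T \<subseteq> ground S E"
    using assms(1) by (simp add: feasible_def routing_subnetwork_def)
  ultimately have "in_node S E Orig headf u \<inter> T \<noteq> {}"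
    unfolding in_node_def by blast
  then show ?thesis by (simp add: atom_def)
qed (auto simp: atom_def)

lemma atom_sum_feasible_constrained:
  fixes c :: "nat \<Rightarrow> real"
  assumes feas: "\<forall>i<n. T i \<in> feasible \<and> 0 \<le> c i"
  shows "(\<lambda>\<beta>. \<Sum>i<n. c i * atom (T i) \<beta>) \<in> constrained"
    (is "?h \<in> _")
proof -
  have "almost_atomic_on (ground S E) ?h"
    using feas by (intro almost_atomic_on_atom_sum) (auto simp: feasible_def routing_subnetwork_def)
  moreover have "C_T S E tailf headf Orig ?h"
    using feas feasible_atom_in_edge unfolding C_T_def by (auto intro: cond_diff_atom_sum_eq_0)
  moreover have "C_D S E headf Orig D ?h"
    using feas feasible_atom_in_node unfolding C_D_def by (auto intro: cond_diff_atom_sum_eq_0)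
  moreover have "C_I S E ?h"
  proof -
    have "atom (T i) (Inl ` S) = 1" if "i < n" for i
      using feas that feasible_source[of "T i"] by (force simp: atom_def)
    moreover have "(\<Sum>s\<in>S. atom (T i) {Inl s}) = 1" if "i < n" for i
      using feas that feasible_source[of "T i"] finite_S by simp
    ultimately show ?thesis
      unfolding C_I_def by (subst sum.swap) (simp add: flip: sum_distrib_left)
  qed
  ultimately show ?thesis unfolding constrained_def by blast
qed

lemma atom_sum_feasible_source:
  fixes c :: "nat \<Rightarrow> real"
  assumes "\<forall>i<n. T i \<in> feasible"
  shows "(\<Sum>i<n. c i * atom (T i) {Inl s}) = (\<Sum>i\<in>{i. i < n \<and> nu (T i) = s}. c i)"
  unfolding atom_sum_singleton using assms feasible_source(2) by (metis (lifting))

lemma zero_achievable_imp_CL: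
  assumes "zero_achievable_routing V E tailf headf S Orig D lam om"
  shows "(lam, om) \<in> CL S E (proj ` constrained)"
proof -
  obtain n T and c :: "nat \<Rightarrow> real" where
    feas: "\<forall>i<n. T i \<in> feasible \<and> 0 \<le> c i" and
    edges: "\<forall>e\<in>E. (\<Sum>i\<in>{i. i < n \<and> Inr e \<in> T i}. c i) \<le> om e" and
    rates: "\<forall>s\<in>S. lam s = (\<Sum>i\<in>{i. i < n \<and> nu (T i) = s}. c i)"
    using assms unfolding zero_achievable_routing_def feasible_def by blast
  define h where "h = (\<lambda>\<beta>. \<Sum>i<n. c i * atom (T i) \<beta>)"
  have "proj h \<in> proj ` constrained"
    using atom_sum_feasible_constrained[OF feas] by (simp add: h_def)
  moreover have "\<forall>s\<in>S. lam s \<le> fst (proj h) s"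
    using rates feas atom_sum_feasible_source[of n T c] by (simp add: h_def proj_def)
  moreover have "\<forall>e\<in>E. snd (proj h) e \<le> om e"
    using edges by (simp add: h_def proj_def atom_sum_singleton del: atom_singleton)
  ultimately show ?thesis by (rule CL_const)
qed

lemma constrained_atom_component_feasible:
  fixes c :: "nat \<Rightarrow> real"
  assumes c: "\<forall>j<m. 0 \<le> c j \<and> T j \<subseteq> ground S E"
    and h: "\<forall>\<beta>\<subseteq>ground S E. h \<beta> = (\<Sum>j<m. c j * atom (T j) \<beta>)"
    and "h \<in> constrained" and i: "i < m" "0 < c i" and s: "s \<in> S" "Inl s \<in> T i"
  shows "T i \<in> feasible \<and> nu (T i) = s"
proof -
  have c0: "\<forall>j<m. 0 \<le> c j" using c by blast
  have "h (Inl ` S) = (\<Sum>a\<in>Inl ` S. h {a})"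
    using \<open>h \<in> constrained\<close> by (simp add: constrained_def C_I_def sum.reindex)
  then have "a = Inl s" if "a \<in> T i \<inter> Inl ` S" for a
    using that s finite_S
    by (intro atom_sum_additive_imp_unique[OF c0 h _ _ _ i, of "Inl ` S"]) (auto simp: ground_def)
  with s have one_source: "T i \<inter> Inl ` S = {Inl s}" by blast
  have "in_edge S E Orig tailf headf e \<inter> T i \<noteq> {}" if "e \<in> E" "Inr e \<in> T i" for e
  proof (rule atom_sum_absorb[OF c0 h _ _ _ i])
    show "cond_diff h {Inr e} (in_edge S E Orig tailf headf e) = 0"
      using \<open>h \<in> constrained\<close> that(1) by (simp add: constrained_def C_T_def)
  qed (use that in \<open>auto simp: ground_def in_edge_def in_node_def\<close>)
  then have rs: "routing_subnetwork S E tailf headf Orig (T i)"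
    using c i one_source unfolding routing_subnetwork_def by simp
  have nu: "nu (T i) = s" using routing_subnetwork_source(2)[OF rs] s by simp
  have "in_node S E Orig headf u \<inter> T i \<noteq> {}" if "u \<in> D s" for u
  proof (rule atom_sum_absorb[OF c0 h _ _ _ i])
    show "cond_diff h {Inl s} (in_node S E Orig headf u) = 0"
      using \<open>h \<in> constrained\<close> that s(1) by (simp add: constrained_def C_D_def)
  qed (use s in \<open>auto simp: ground_def in_node_def\<close>)
  then have "\<forall>u\<in>D (nu (T i)). \<exists>f\<in>T i. u \<in> headX Orig headf f"
    unfolding nu in_node_def by blast
  with rs nu show ?thesis unfolding feasible_def by blast
qed

lemma constrained_imp_weighting:
  assumes "h \<in> constrained"
  obtains w where "\<forall>T. 0 \<le> w T" "\<forall>s\<in>S. source_load w s = h {Inl s}"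
    and "\<forall>e\<in>E. edge_load w e \<le> h {Inr e}"
proof -
  have "almost_atomic_on (ground S E) h" using assms by (simp add: constrained_def)
  then obtain m :: nat and c T where c: "\<forall>i<m. 0 \<le> c i \<and> T i \<subseteq> ground S E"
    and hT: "\<forall>\<beta>\<subseteq>ground S E. h \<beta> = (\<Sum>i<m. c i * atom (T i) \<beta>)"
    by (rule almost_atomic_onE)
  define I where "I = {i. i < m \<and> 0 < c i}"
  define w where "w T' = (\<Sum>i\<in>{i\<in>I. T i = T'}. c i)" for T'
  have loads: "(\<Sum>T'\<in>{T'\<in>feasible. P T'}. w T') = (\<Sum>i\<in>{i\<in>I. T i \<in> feasible \<and> P (T i)}. c i)" for P
    unfolding w_def by (rule sum_fibres) (simp_all add: I_def finite_feasible)
  have h_single: "h {x} = (\<Sum>i\<in>{i\<in>I. x \<in> T i}. c i)" if "x \<in> ground S E" for x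
    using that hT c atom_sum_singleton_pos[of m c T x] by (simp add: I_def conj_assoc)
  show thesis
  proof
    show "\<forall>T'. 0 \<le> w T'" unfolding w_def I_def by (auto intro!: sum_nonneg)
    show "\<forall>s\<in>S. source_load w s = h {Inl s}"
    proof
      fix s assume "s \<in> S"
      have "T i \<in> feasible \<and> nu (T i) = s \<longleftrightarrow> Inl s \<in> T i" if "i \<in> I" for i
        using that \<open>s \<in> S\<close> constrained_atom_component_feasible[OF c hT assms, of i s]
          feasible_source(2)[of "T i" s] by (auto simp: I_def)
      then have "{i\<in>I. T i \<in> feasible \<and> nu (T i) = s} = {i\<in>I. Inl s \<in> T i}"
        by blast
      with \<open>s \<in> S\<close> show "source_load w s = h {Inl s}"
        by (simp add: source_load_def loads h_single ground_def)
    qed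
    show "\<forall>e\<in>E. edge_load w e \<le> h {Inr e}"
    proof
      fix e assume "e \<in> E"
      have "(\<Sum>i\<in>{i\<in>I. T i \<in> feasible \<and> Inr e \<in> T i}. c i) \<le> (\<Sum>i\<in>{i\<in>I. Inr e \<in> T i}. c i)"
        by (rule sum_mono2) (auto simp: I_def)
      with \<open>e \<in> E\<close> show "edge_load w e \<le> h {Inr e}"
        by (simp add: edge_load_def loads h_single ground_def)
    qed
  qed
qed

lemma weighting_limit:
  fixes x :: "nat \<Rightarrow> ('s + 'e) set \<Rightarrow> real"
  assumes nonneg: "\<forall>n. \<forall>T\<in>feasible. 0 \<le> x n T"
    and sources: "\<forall>s\<in>S. (\<lambda>n. source_load (x n) s) \<longlonglongrightarrow> Ls s"
    and edges: "\<forall>e\<in>E. \<forall>n. edge_load (x n) e \<le> a n e" "\<forall>e\<in>E. (\<lambda>n. a n e) \<longlonglongrightarrow> Le e"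
  obtains y where "\<forall>T\<in>feasible. 0 \<le> y T" "\<forall>s\<in>S. source_load y s = Ls s"
    and "\<forall>e\<in>E. edge_load y e \<le> Le e"
proof -
  have "Bseq (\<lambda>n. x n T)" if T: "T \<in> feasible" for T
  proof -
    have "Bseq (\<lambda>n. source_load (x n) (nu T))"
      using sources feasible_source(1)[OF T] by (blast intro: convergent_imp_Bseq convergentI)
    then obtain B where B: "\<And>n. norm (source_load (x n) (nu T)) \<le> B" by (auto simp: Bseq_def)
    have "norm (x n T) \<le> B" for n
    proof -
      have "x n T \<le> source_load (x n) (nu T)"
        unfolding source_load_def using T nonneg finite_feasible by (intro member_le_sum) auto
      then show ?thesis using B[of n] nonneg T by auto
    qed
    then show ?thesis by (rule BseqI')
  qed
  then obtain r where r: "strict_mono r" "\<forall>T\<in>feasible. convergent (\<lambda>n. x (r n) T)"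
    using finite_family_convergent_subsequence[OF finite_feasible] by blast
  define y where "y T = lim (\<lambda>n. x (r n) T)" for T
  have y: "(\<lambda>n. x (r n) T) \<longlonglongrightarrow> y T" if "T \<in> feasible" for T
    using r(2) that by (simp add: y_def convergent_LIMSEQ_iff)
  have lim_sum: "(\<lambda>n. \<Sum>T\<in>{T\<in>feasible. P T}. x (r n) T) \<longlonglongrightarrow> (\<Sum>T\<in>{T\<in>feasible. P T}. y T)" for P
    using y by (intro tendsto_sum) auto
  show thesis
  proof
    show "\<forall>T\<in>feasible. 0 \<le> y T"
      using y nonneg by (blast intro: LIMSEQ_le_const)
    show "\<forall>s\<in>S. source_load y s = Ls s"
    proof
      fix s assume "s \<in> S"
      then have "(\<lambda>n. source_load (x (r n)) s) \<longlonglongrightarrow> Ls s"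
        using sources LIMSEQ_subseq_LIMSEQ[OF _ r(1)] by (auto simp: o_def)
      with lim_sum[of "\<lambda>T. nu T = s"] show "source_load y s = Ls s"
        unfolding source_load_def by (rule LIMSEQ_unique)
    qed
    show "\<forall>e\<in>E. edge_load y e \<le> Le e"
    proof
      fix e assume "e \<in> E"
      then have "(\<lambda>n. a (r n) e) \<longlonglongrightarrow> Le e"
        using edges(2) LIMSEQ_subseq_LIMSEQ[OF _ r(1)] by (auto simp: o_def)
      with lim_sum[of "\<lambda>T. Inr e \<in> T"] show "edge_load y e \<le> Le e"
        unfolding edge_load_def by (rule LIMSEQ_le) (use edges(1) \<open>e \<in> E\<close> in \<open>auto simp: edge_load_def\<close>)
    qed
  qed
qed

lemma proj_constrained_weighting:
  assumes "x \<in> proj ` constrained"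
  shows "\<exists>w. (\<forall>T\<in>feasible. 0 \<le> w T) \<and> (\<forall>s\<in>S. source_load w s = fst x s)
             \<and> (\<forall>e\<in>E. edge_load w e \<le> snd x e)"
proof -
  obtain h where "h \<in> constrained" "x = proj h" using assms by blast
  moreover from \<open>h \<in> constrained\<close> obtain w where "\<forall>T. 0 \<le> w T"
    "\<forall>s\<in>S. source_load w s = h {Inl s}" "\<forall>e\<in>E. edge_load w e \<le> h {Inr e}"
    by (rule constrained_imp_weighting)
  ultimately show ?thesis by (auto simp: proj_def)
qed

lemma CL_imp_weighting:
  assumes "(lam, om) \<in> CL S E (proj ` constrained)"
  obtains y where "\<forall>T\<in>feasible. 0 \<le> y T" "\<forall>s\<in>S. lam s \<le> source_load y s"
    and "\<forall>e\<in>E. edge_load y e \<le> om e"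
proof -
  obtain seq c where seq: "\<forall>n. seq n \<in> proj ` constrained \<and> 0 < c n"
    and edges: "\<forall>e\<in>E. \<exists>L. (\<lambda>n. c n * snd (seq n) e) \<longlonglongrightarrow> L \<and> L \<le> om e"
    and sources: "\<forall>s\<in>S. \<exists>L. (\<lambda>n. c n * fst (seq n) s) \<longlonglongrightarrow> L \<and> lam s \<le> L"
    using assms unfolding CL_def by blast
  have "\<forall>n. \<exists>w. (\<forall>T\<in>feasible. 0 \<le> w T) \<and> (\<forall>s\<in>S. source_load w s = fst (seq n) s)
                \<and> (\<forall>e\<in>E. edge_load w e \<le> snd (seq n) e)"
    using seq by (simp add: proj_constrained_weighting)
  then obtain w where w: "\<forall>n. (\<forall>T\<in>feasible. 0 \<le> w n T) \<and> (\<forall>s\<in>S. source_load (w n) s = fst (seq n) s)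
                \<and> (\<forall>e\<in>E. edge_load (w n) e \<le> snd (seq n) e)"
    by (rule exE[OF choice])
  obtain Le where Le: "\<forall>e\<in>E. (\<lambda>n. c n * snd (seq n) e) \<longlonglongrightarrow> Le e \<and> Le e \<le> om e"
    by (rule exE[OF bchoice[OF edges]])
  obtain Ls where Ls: "\<forall>s\<in>S. (\<lambda>n. c n * fst (seq n) s) \<longlonglongrightarrow> Ls s \<and> lam s \<le> Ls s"
    by (rule exE[OF bchoice[OF sources]])
  define x where "x n T = c n * w n T" for n T
  have "\<forall>n. \<forall>T\<in>feasible. 0 \<le> x n T"
    using w seq by (simp add: x_def less_imp_le)
  moreover have "\<forall>s\<in>S. (\<lambda>n. source_load (x n) s) \<longlonglongrightarrow> Ls s"
    using Ls w by (simp add: x_def source_load_def flip: sum_distrib_left)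
  moreover have "\<forall>e\<in>E. \<forall>n. edge_load (x n) e \<le> c n * snd (seq n) e"
    using w seq by (simp add: x_def edge_load_def less_imp_le flip: sum_distrib_left)
  moreover have "\<forall>e\<in>E. (\<lambda>n. c n * snd (seq n) e) \<longlonglongrightarrow> Le e"
    using Le by blast
  ultimately obtain y where y: "\<forall>T\<in>feasible. 0 \<le> y T" "\<forall>s\<in>S. source_load y s = Ls s"
    "\<forall>e\<in>E. edge_load y e \<le> Le e"
    by (rule weighting_limit)
  show thesis
  proof (rule that)
    show "\<forall>T\<in>feasible. 0 \<le> y T" by (fact y(1))
    show "\<forall>s\<in>S. lam s \<le> source_load y s" using y(2) Ls by simp
    show "\<forall>e\<in>E. edge_load y e \<le> om e" using y(3) Le by (fastforce intro: order_trans)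
  qed
qed

lemma weighting_reduce_rates:
  assumes w: "\<forall>T\<in>feasible. 0 \<le> w T" and lam: "\<forall>s\<in>S. 0 \<le> lam s \<and> lam s \<le> source_load w s"
  obtains w' where "\<forall>T\<in>feasible. 0 \<le> w' T" "\<forall>s\<in>S. source_load w' s = lam s"
    and "\<forall>e. edge_load w' e \<le> edge_load w e"
proof -
  \<comment> \<open>Where the load of a source is 0, so is its rate, and the junk value of the division is harmless.\<close>
  define q where "q s = lam s / source_load w s" for s
  have q: "0 \<le> q s \<and> q s \<le> 1" if "s \<in> S" for s
    using lam that by (auto simp: q_def divide_le_eq_1)
  define w' where "w' T = w T * q (nu T)" for T
  have w': "0 \<le> w' T \<and> w' T \<le> w T" if "T \<in> feasible" for T
    using w q feasible_source(1) that by (auto simp: w'_def intro: mult_left_le)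
  have "source_load w' s = lam s" if "s \<in> S" for s
  proof -
    have "source_load w' s = source_load w s * q s"
      by (simp add: source_load_def w'_def sum_distrib_right)
    also have "\<dots> = lam s"
      using lam that by (cases "source_load w s = 0") (auto simp: q_def)
    finally show ?thesis .
  qed
  moreover have "edge_load w' e \<le> edge_load w e" for e
    using w' by (auto simp: edge_load_def intro: sum_mono)
  ultimately show thesis
    using w' that by blast
qed

lemma weighting_imp_zero_achievable:
  assumes "\<forall>T\<in>feasible. 0 \<le> w T" "\<forall>s\<in>S. source_load w s = lam s" "\<forall>e\<in>E. edge_load w e \<le> om e"
  shows "zero_achievable_routing V E tailf headf S Orig D lam om"
proof -
  obtain g where g: "bij_betw g {0..<card feasible} feasible"
    using ex_bij_betw_nat_finite[OF finite_feasible] by blast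
  have img: "g ` {0..<card feasible} = feasible"
    using g by (rule bij_betw_imp_surj_on)
  then have into: "g i \<in> feasible" if "i < card feasible" for i
    using that by auto
  have reindex: "(\<Sum>i\<in>{i. i < card feasible \<and> P (g i)}. w (g i)) = (\<Sum>T\<in>{T\<in>feasible. P T}. w T)" for P
  proof (rule sum.reindex_bij_betw, rule bij_betw_subset[OF g])
    show "g ` {i. i < card feasible \<and> P (g i)} = {T\<in>feasible. P T}"
    proof (intro equalityI subsetI)
      fix T assume T: "T \<in> {T\<in>feasible. P T}"
      then obtain i where "i < card feasible" "T = g i"
        using img by (metis (no_types, lifting) atLeastLessThan_iff imageE mem_Collect_eq)
      with T show "T \<in> g ` {i. i < card feasible \<and> P (g i)}" by auto
    qed (use into in auto)
  qed auto
  show ?thesis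
    unfolding zero_achievable_routing_def
  proof (intro exI conjI)
    show "\<forall>i<card feasible. routing_subnetwork S E tailf headf Orig (g i) \<and> 0 \<le> w (g i)"
      using into assms(1) by (simp add: feasible_def)
    show "\<forall>e\<in>E. (\<Sum>i\<in>{i. i < card feasible \<and> Inr e \<in> g i}. w (g i)) \<le> om e"
      using assms(3) by (simp add: reindex edge_load_def)
    show "\<forall>i<card feasible. \<forall>u\<in>D (nu (g i)). \<exists>f\<in>g i. u \<in> headX Orig headf f"
      using into by (simp add: feasible_def)
    show "\<forall>s\<in>S. lam s = (\<Sum>i\<in>{i. i < card feasible \<and> nu (g i) = s}. w (g i))"
      using assms(2) reindex[of "\<lambda>T. nu T = _"] by (simp add: source_load_def)
  qed
qed

end

theorem theorem5:
  fixes V :: "'v set" and E :: "'e set" and tailf :: "'e \<Rightarrow> 'v" and headf :: "'e \<Rightarrow> 'v set"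
    and S :: "'s set" and Orig :: "'s \<Rightarrow> 'v set" and D :: "'s \<Rightarrow> 'v set"
    and lam :: "'s \<Rightarrow> real" and om :: "'e \<Rightarrow> real"
  assumes "network_problem V E tailf headf S Orig D"
    and "\<forall>s\<in>S. lam s \<ge> 0" and "\<forall>e\<in>E. om e \<ge> 0"
  shows "zero_achievable_routing V E tailf headf S Orig D lam om \<longleftrightarrow>
    (lam, om) \<in> CL S E (proj ` {h. almost_atomic_on (ground S E) h \<and> C_T S E tailf headf Orig h
                                  \<and> C_D S E headf Orig D h \<and> C_I S E h})"
proof -
  interpret routing_problem S E tailf headf Orig D
    using assms(1) by unfold_locales (simp_all add: network_problem_def)
  show ?thesis
    unfolding constrained_def [symmetric]
  proof
    assume "zero_achievable_routing V E tailf headf S Orig D lam om"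
    then show "(lam, om) \<in> CL S E (proj ` constrained)" by (rule zero_achievable_imp_CL)
  next
    assume "(lam, om) \<in> CL S E (proj ` constrained)"
    then obtain y where y: "\<forall>T\<in>feasible. 0 \<le> y T" "\<forall>s\<in>S. lam s \<le> source_load y s"
      "\<forall>e\<in>E. edge_load y e \<le> om e"
      by (rule CL_imp_weighting)
    have "\<forall>s\<in>S. 0 \<le> lam s \<and> lam s \<le> source_load y s" using y(2) assms(2) by simp
    then obtain w where w: "\<forall>T\<in>feasible. 0 \<le> w T" "\<forall>s\<in>S. source_load w s = lam s"
      "\<forall>e. edge_load w e \<le> edge_load y e"
      by (rule weighting_reduce_rates[OF y(1)])
    have "\<forall>e\<in>E. edge_load w e \<le> om e" using w(3) y(3) by (blast intro: order_trans)
    with w(1,2) show "zero_achievable_routing V E tailf headf S Orig D lam om"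
      by (rule weighting_imp_zero_achievable)
  qed
qed

end
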